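(* Let $(X,\mu)$ be a probability measure space, $0<q<1$, $w:X\to[0,\infty)$ measurable, and for each $n\in\mathbb{N}$ let $X_n\subseteq X$ be measurable and $w_n:X_n\to\mathbb{R}^+$ measurable with $w_n\ge w$ on $X_n$. Suppose $\lim_n\int_{X_n}w_n^q\,d\mu$ and $\lim_n\int_{X_n}w^q\,d\mu$ exist as real numbers and are equal. Then $\lim_n\int_{X_n}(w_n-w)^q\,d\mu=0$. *)

theory Defs
  imports "HOL-Probability.Probability"
begin

end

theory Submission imports Defs begin

text \<open>
  For \<open>K > 0\<close> and \<open>a, d \<ge> 0\<close> one has
  \<open>d\<^sup>q \<le> K\<^sup>-\<^sup>q a\<^sup>q + C\<^sub>K ((a + d)\<^sup>q - a\<^sup>q)\<close> with \<open>C\<^sub>K = 1 / ((1 + K)\<^sup>q - K\<^sup>q)\<close>: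
  if \<open>a > K d\<close> the first term suffices, and otherwise the increment of \<open>t\<^sup>q\<close>
  over \<open>[a, a + d]\<close> is at least \<open>d\<^sup>q / C\<^sub>K\<close> by concavity.
  Integrating over \<open>X\<^sub>n\<close> with \<open>a = w\<close>, \<open>d = w\<^sub>n - w\<close>, the second term
  is \<open>C\<^sub>K\<close> times the difference of the two integrals, which tends to \<open>0\<close>,
  while the first tends to \<open>K\<^sup>-\<^sup>q L\<close>; now let \<open>K \<rightarrow> \<infinity>\<close>.
\<close>

lemma one_plus_powr_minus_powr_antimono:
  fixes q s t :: real
  assumes "0 < q" "q < 1" "0 \<le> s" "s \<le> t"
  shows "(1 + t) powr q - t powr q \<le> (1 + s) powr q - s powr q"
proof (rule DERIV_nonpos_imp_decreasing_open[OF assms(4), where f="\<lambda>x. (1 + x) powr q - x powr q"])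
  fix x assume "s < x" "x < t"
  then have x: "x > 0" using assms by auto
  have "((\<lambda>x. (1 + x) powr q - x powr q) has_real_derivative
          q * (1 + x) powr (q - 1) - q * x powr (q - 1)) (at x)"
    using x by (auto intro!: derivative_eq_intros)
  moreover have "(1 + x) powr (q - 1) \<le> x powr (q - 1)"
    using x assms by (intro powr_mono2') auto
  then have "q * (1 + x) powr (q - 1) - q * x powr (q - 1) \<le> 0"
    using assms by (simp add: mult_left_mono)
  ultimately show "\<exists>y. ((\<lambda>x. (1 + x) powr q - x powr q) has_real_derivative y) (at x) \<and> y \<le> 0"
    by blast
next
  show "continuous_on {s..t} (\<lambda>x. (1 + x) powr q - x powr q)"
    using assms by (intro continuous_intros continuous_on_powr') auto
qed

lemma powr_increment_bound:
  fixes q a d K :: real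
  assumes q: "0 < q" "q < 1" and a: "0 \<le> a" and d: "0 \<le> d" and K: "0 < K"
  defines "C \<equiv> 1 / ((1 + K) powr q - K powr q)"
  shows "d powr q + C * a powr q \<le> (1 / K) powr q * a powr q + C * (a + d) powr q"
proof -
  have gap_pos: "(1 + K) powr q - K powr q > 0" using q K by (simp add: powr_less_mono2)
  then have C_pos: "C > 0" unfolding C_def by simp
  show ?thesis
  proof (cases "a \<le> K * d")
    case True
    show ?thesis
    proof (cases "d = 0")
      case True
      then show ?thesis using q a by simp
    next
      case False
      then have d_pos: "d > 0" using d by simp
      define t where "t = a / d"
      have t: "0 \<le> t" "t \<le> K" using \<open>a \<le> K * d\<close> a d_pos by (auto simp: t_def field_simps)
      have a_eq: "a = t * d" using d_pos by (simp add: t_def)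
      have "d powr q * ((1 + K) powr q - K powr q) \<le> d powr q * ((1 + t) powr q - t powr q)"
        using one_plus_powr_minus_powr_antimono[OF q t] by (simp add: mult_left_mono)
      also have "\<dots> = (a + d) powr q - a powr q"
        using t d_pos by (simp add: a_eq algebra_simps powr_mult[symmetric])
      finally have "d powr q \<le> C * ((a + d) powr q - a powr q)"
        using gap_pos unfolding C_def by (simp add: field_simps)
      then have "d powr q \<le> C * (a + d) powr q - C * a powr q" by (simp add: right_diff_distrib)
      moreover have "0 \<le> (1 / K) powr q * a powr q" by simp
      ultimately show ?thesis by linarith
    qed
  next
    case False
    then have "d \<le> a / K" using K by (simp add: field_simps)
    then have "d powr q \<le> (a / K) powr q" using d q by (intro powr_mono2) auto
    also have "\<dots> = (1 / K) powr q * a powr q"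
      using a K by (simp add: powr_divide powr_mult[symmetric])
    finally show ?thesis
      using C_pos powr_mono2[of q a "a + d"] q a d by (smt (verit) mult_left_mono)
  qed
qed

lemma set_nn_integral_powr_increment_bound:
  fixes M :: "'a measure" and q K :: real and u v :: "'a \<Rightarrow> real"
  assumes q: "0 < q" "q < 1" and K: "0 < K"
    and A: "A \<in> sets M"
    and u: "u \<in> borel_measurable (restrict_space M A)"
    and v: "v \<in> borel_measurable (restrict_space M A)"
    and v_nonneg: "\<And>x. x \<in> A \<Longrightarrow> 0 \<le> v x"
    and v_le_u: "\<And>x. x \<in> A \<Longrightarrow> v x \<le> u x"
  defines "C \<equiv> 1 / ((1 + K) powr q - K powr q)"
  shows "(\<integral>\<^sup>+ x \<in> A. ennreal ((u x - v x) powr q) \<partial>M) + C * (\<integral>\<^sup>+ x \<in> A. ennreal (v x powr q) \<partial>M)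
         \<le> (1 / K) powr q * (\<integral>\<^sup>+ x \<in> A. ennreal (v x powr q) \<partial>M)
           + C * (\<integral>\<^sup>+ x \<in> A. ennreal (u x powr q) \<partial>M)"
proof -
  define N where "N = restrict_space M A"
  have A_space: "A \<inter> space M \<in> sets M" using A by (simp add: sets.Int_space_eq2)
  have space_N: "space N = A"
    using sets.sets_into_space[OF A] unfolding N_def by (auto simp: space_restrict_space)
  have set_integral: "(\<integral>\<^sup>+ x \<in> A. f x \<partial>M) = integral\<^sup>N N f" for f
    unfolding N_def by (rule nn_integral_restrict_space[OF A_space, symmetric])
  have C_pos: "C > 0" unfolding C_def using q K by (simp add: powr_less_mono2)
  have "(\<integral>\<^sup>+ x \<in> A. ennreal ((u x - v x) powr q) \<partial>M) + C * (\<integral>\<^sup>+ x \<in> A. ennreal (v x powr q) \<partial>M)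
        = \<integral>\<^sup>+ x. ennreal ((u x - v x) powr q) + C * ennreal (v x powr q) \<partial>N"
    unfolding set_integral using u v N_def
    by (subst nn_integral_add) (auto simp: nn_integral_cmult)
  also have "\<dots> \<le> \<integral>\<^sup>+ x. (1 / K) powr q * ennreal (v x powr q) + C * ennreal (u x powr q) \<partial>N"
  proof (rule nn_integral_mono)
    fix x assume "x \<in> space N"
    then have x: "x \<in> A" by (simp add: space_N)
    have "(u x - v x) powr q + C * v x powr q \<le> (1 / K) powr q * v x powr q + C * (v x + (u x - v x)) powr q"
      unfolding C_def using x v_nonneg v_le_u by (intro powr_increment_bound q K) auto
    then show "ennreal ((u x - v x) powr q) + C * ennreal (v x powr q)
               \<le> (1 / K) powr q * ennreal (v x powr q) + C * ennreal (u x powr q)"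
      using C_pos by (simp add: ennreal_mult[symmetric] ennreal_plus[symmetric] del: ennreal_plus)
  qed
  also have "\<dots> = (1 / K) powr q * (\<integral>\<^sup>+ x \<in> A. ennreal (v x powr q) \<partial>M)
                  + C * (\<integral>\<^sup>+ x \<in> A. ennreal (u x powr q) \<partial>M)"
    unfolding set_integral using u v N_def
    by (subst nn_integral_add) (auto simp: nn_integral_cmult)
  finally show ?thesis .
qed

lemma tendsto_zero_by_eps_gap_bound:
  fixes f g h :: "nat \<Rightarrow> real"
  assumes f: "f \<longlonglongrightarrow> L" and g: "g \<longlonglongrightarrow> L"
    and h_nonneg: "\<And>n. 0 \<le> h n"
    and bound: "\<And>\<epsilon>. \<epsilon> > 0 \<Longrightarrow> \<exists>C. \<forall>\<^sub>F n in sequentially. h n \<le> \<epsilon> * g n + C * (f n - g n)"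
  shows "h \<longlonglongrightarrow> 0"
proof (rule order_tendstoI)
  fix y :: real assume "y < 0"
  then show "\<forall>\<^sub>F n in sequentially. y < h n" using h_nonneg by (simp add: less_le_trans)
next
  fix y :: real assume y: "0 < y"
  define \<epsilon> where "\<epsilon> = y / (\<bar>L\<bar> + 1)"
  have denom_pos: "\<bar>L\<bar> + 1 > 0" using abs_ge_zero[of L] by linarith
  then have \<epsilon>_pos: "\<epsilon> > 0" using y by (simp add: \<epsilon>_def)
  have "\<epsilon> * (\<bar>L\<bar> + 1) = y" using denom_pos by (simp add: \<epsilon>_def)
  then have "\<epsilon> * \<bar>L\<bar> + \<epsilon> = y" by (simp add: distrib_left)
  moreover have "\<epsilon> * L \<le> \<epsilon> * \<bar>L\<bar>" using \<epsilon>_pos by (simp add: mult_left_mono)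
  ultimately have \<epsilon>: "\<epsilon> > 0" "\<epsilon> * L < y" using \<epsilon>_pos by linarith+
  obtain C where C: "\<forall>\<^sub>F n in sequentially. h n \<le> \<epsilon> * g n + C * (f n - g n)"
    using bound[OF \<epsilon>(1)] by blast
  have "(\<lambda>n. \<epsilon> * g n + C * (f n - g n)) \<longlonglongrightarrow> \<epsilon> * L + C * (L - L)"
    by (intro tendsto_intros f g)
  then have "\<forall>\<^sub>F n in sequentially. \<epsilon> * g n + C * (f n - g n) < y"
    using \<epsilon>(2) by (simp add: order_tendstoD(2))
  with C show "\<forall>\<^sub>F n in sequentially. h n < y" by eventually_elim auto
qed

lemma ennreal_gap_bound_imp_real:
  fixes f g h C \<epsilon> :: real
  assumes "0 \<le> C" "0 \<le> \<epsilon>" "0 \<le> h" "0 \<le> g" "0 \<le> f"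
    and "ennreal h + ennreal C * ennreal g \<le> ennreal \<epsilon> * ennreal g + ennreal C * ennreal f"
  shows "h \<le> \<epsilon> * g + C * (f - g)"
proof -
  have "ennreal (h + C * g) \<le> ennreal (\<epsilon> * g + C * f)"
    using assms by (simp add: ennreal_mult)
  then have "h + C * g \<le> \<epsilon> * g + C * f"
    by (rule ennreal_le_iff[THEN iffD1, rotated]) (use assms in simp)
  then show ?thesis by (simp add: algebra_simps)
qed

lemma ennreal_tendsto_zero_by_eps_gap_bound:
  fixes F G H :: "nat \<Rightarrow> ennreal"
  assumes F: "F \<longlonglongrightarrow> l" and G: "G \<longlonglongrightarrow> l" and l: "l < top"
    and bound: "\<And>\<epsilon>. \<epsilon> > 0 \<Longrightarrow> \<exists>C \<ge> 0. \<forall>n. H n + ennreal C * G n \<le> ennreal \<epsilon> * G n + ennreal C * F n"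
  shows "H \<longlonglongrightarrow> 0"
proof -
  have F_fin: "\<forall>\<^sub>F n in sequentially. F n < top" using order_tendstoD(2)[OF F l] .
  have G_fin: "\<forall>\<^sub>F n in sequentially. G n < top" using order_tendstoD(2)[OF G l] .
  obtain C1 :: real where C1: "\<forall>n. H n + ennreal C1 * G n \<le> ennreal 1 * G n + ennreal C1 * F n"
    using bound[of 1] by auto
  have H_le: "H n \<le> G n + ennreal C1 * F n" for n
  proof -
    have "H n \<le> H n + ennreal C1 * G n" by simp
    also have "\<dots> \<le> G n + ennreal C1 * F n" using spec[OF C1, of n] by simp
    finally show ?thesis .
  qed
  have H_fin: "\<forall>\<^sub>F n in sequentially. H n < top"
    using F_fin G_fin
    by eventually_elim (metis H_le ennreal_less_top ennreal_mult_less_top ennreal_add_less_top le_less_trans)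
  have F_eq: "\<forall>\<^sub>F n in sequentially. ennreal (enn2real (F n)) = F n"
    using F_fin by eventually_elim (simp add: ennreal_enn2real_if)
  have G_eq: "\<forall>\<^sub>F n in sequentially. ennreal (enn2real (G n)) = G n"
    using G_fin by eventually_elim (simp add: ennreal_enn2real_if)
  have H_eq: "\<forall>\<^sub>F n in sequentially. ennreal (enn2real (H n)) = H n"
    using H_fin by eventually_elim (simp add: ennreal_enn2real_if)
  have "(\<lambda>n. enn2real (H n)) \<longlonglongrightarrow> 0"
  proof (rule tendsto_zero_by_eps_gap_bound)
    show "(\<lambda>n. enn2real (F n)) \<longlonglongrightarrow> enn2real l" "(\<lambda>n. enn2real (G n)) \<longlonglongrightarrow> enn2real l"
      using F G l by (auto intro: tendsto_enn2real)
  next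
    fix \<epsilon> :: real assume "\<epsilon> > 0"
    then obtain C where C: "C \<ge> 0" "\<forall>n. H n + ennreal C * G n \<le> ennreal \<epsilon> * G n + ennreal C * F n"
      using bound by blast
    have "\<forall>\<^sub>F n in sequentially. enn2real (H n) \<le> \<epsilon> * enn2real (G n) + C * (enn2real (F n) - enn2real (G n))"
      using F_eq G_eq H_eq
      by eventually_elim (rule ennreal_gap_bound_imp_real; use C \<open>\<epsilon> > 0\<close> in simp)
    then show "\<exists>C. \<forall>\<^sub>F n in sequentially. enn2real (H n) \<le> \<epsilon> * enn2real (G n) + C * (enn2real (F n) - enn2real (G n))"
      by blast
  qed simp
  then have "(\<lambda>n. ennreal (enn2real (H n))) \<longlonglongrightarrow> 0"
    using tendsto_ennrealI by fastforce
  then show ?thesis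
    using H_eq by (rule Lim_transform_eventually)
qed

theorem lemma5p2:
  fixes M :: "'a measure" and q L :: real and w :: "'a \<Rightarrow> real"
    and X :: "nat \<Rightarrow> 'a set" and wn :: "nat \<Rightarrow> 'a \<Rightarrow> real"
  assumes "prob_space M"
    and "0 < q" and "q < 1"
    and "w \<in> borel_measurable M"
    and "\<And>x. x \<in> space M \<Longrightarrow> w x \<ge> 0"
    and "\<And>n. X n \<in> sets M"
    and "\<And>n. wn n \<in> borel_measurable (restrict_space M (X n))"
    and "\<And>n x. x \<in> X n \<Longrightarrow> wn n x > 0"
    and "\<And>n x. x \<in> X n \<Longrightarrow> wn n x \<ge> w x"
    and "(\<lambda>n. \<integral>\<^sup>+ x \<in> X n. ennreal (wn n x powr q) \<partial>M) \<longlonglongrightarrow> ennreal L"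
    and "(\<lambda>n. \<integral>\<^sup>+ x \<in> X n. ennreal (w x powr q) \<partial>M) \<longlonglongrightarrow> ennreal L"
    and "L \<ge> 0"
  shows "(\<lambda>n. \<integral>\<^sup>+ x \<in> X n. ennreal ((wn n x - w x) powr q) \<partial>M) \<longlonglongrightarrow> 0"
proof (rule ennreal_tendsto_zero_by_eps_gap_bound[OF assms(10,11)])
  fix \<epsilon> :: real assume \<epsilon>: "\<epsilon> > 0"
  define K where "K = 1 / \<epsilon> powr (1 / q)"
  have K: "K > 0" "(1 / K) powr q = \<epsilon>" using \<epsilon> assms(2) by (simp_all add: K_def powr_powr)
  define C where "C = 1 / ((1 + K) powr q - K powr q)"
  have "C \<ge> 0" using K assms(2) by (simp add: C_def powr_less_mono2 less_imp_le)
  moreover have "w \<in> borel_measurable (restrict_space M (X n))" for n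
    using assms(4) by (rule measurable_restrict_space1)
  moreover have "x \<in> X n \<Longrightarrow> 0 \<le> w x" for n x
    using assms(5,6) sets.sets_into_space by blast
  ultimately show "\<exists>C \<ge> 0. \<forall>n. (\<integral>\<^sup>+ x \<in> X n. ennreal ((wn n x - w x) powr q) \<partial>M)
                    + ennreal C * (\<integral>\<^sup>+ x \<in> X n. ennreal (w x powr q) \<partial>M)
                  \<le> ennreal \<epsilon> * (\<integral>\<^sup>+ x \<in> X n. ennreal (w x powr q) \<partial>M)
                    + ennreal C * (\<integral>\<^sup>+ x \<in> X n. ennreal (wn n x powr q) \<partial>M)"
    using set_nn_integral_powr_increment_bound[OF assms(2,3) K(1) assms(6,7), of w] assms(9)
    unfolding C_def K(2) by blast
qed simp

end
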